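(* Let $\delta'\in(0,1)$, $\rho=(\rho_c,\rho_u,\rho_w)\in(0,\infty)^3$ and $X^{(1)},\dots,X^{(n)}\in\mathcal X$. On the event $\mathcal E_{U,m}(\delta')$, for every $\varphi\in\Omega_\rho$, \[ \sup_{j\in[n]}\big|f(X^{(j)};\varphi)-f_{\mathrm{lin}}(X^{(j)};\varphi)\big|\le\frac1{\sqrt m}\Big(L_{1,m}(\delta')\rho_c\sqrt{\rho_w^2+\rho_u^2}+L_{2,m}(\delta')(\rho_w^2+\rho_u^2)\Big)=:B_{\mathrm{lin},m}(\delta'). \]
   Context: $\mathcal{X}=\{X\in\mathbb{R}^{d\times T}:\max_t\|X_t\|_2\le1\}$ (columns $X_t$); each $X$ has a fixed query $q_X\in\mathbb{R}^d$, $\|q_X\|_2\le1$. Softmax $(\sigma_s(z))_t=e^{z_t}/\sum_se^{z_s}$; $a(X;W)=X\sigma_s(X^\top Wq_X)$; $h(X;\theta)=\sigma(U^\top a(X;W))$, $\theta=(U,\operatorname{vec}(W))$; $f(X;\varphi)=m^{-1/2}\sum_{i=1}^mc_ih(X;\theta_i)$, $\varphi_i=(c_i,U_i,\operatorname{vec}(W_i))$. $\sigma$ twice differentiable with $|\sigma|\le\sigma_0,|\sigma'|\le\sigma_1,|\sigma''|\le\sigma_2$. $m$ even. Symmetric initialization $\varphi^{(0)}$: for $i\le m/2$, independently, $W_i^{(0)}$ with i.i.d. $\mathcal N(0,1)$ entries, $U_i^{(0)}\sim\mathcal N(0,I_d)$, $c_i^{(0)}$ uniform on $\{\pm1\}$;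 $W_{i+m/2}^{(0)}=W_i^{(0)}$, $U_{i+m/2}^{(0)}=U_i^{(0)}$, $c_{i+m/2}^{(0)}=-c_i^{(0)}$. $\Omega_\rho=\{\varphi:|c_i-c_i^{(0)}|\le\rho_c/\sqrt m,\|U_i-U_i^{(0)}\|_2\le\rho_u/\sqrt m,\|W_i-W_i^{(0)}\|_F\le\rho_w/\sqrt m\ \forall i\}$. $f_{\mathrm{lin}}(X;\varphi)=f(X;\varphi^{(0)})+\langle\nabla_\varphi f(X;\varphi^{(0)}),\varphi-\varphi^{(0)}\rangle$. $B_{U,m}(\delta')=\sqrt d+\sqrt{2\log(m/(2\delta'))}+\rho_u/\sqrt m$; $L_{1,m}(\delta')=\sigma_1\sqrt{1+B_{U,m}^2}$; $L_{2,m}(\delta')=\sigma_2(1+B_{U,m}^2)+8\sigma_1\sqrt{1+B_{U,m}^2}$. $\mathcal E_{U,m}(\delta')=\{\max_{i\in[m]}\|U_i^{(0)}\|_2\le\sqrt d+\sqrt{2\log(m/(2\delta'))}\}$. *)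

theory Defs
  imports "HOL-Analysis.Analysis"
begin

text \<open>A data point X in R^{d x T} is represented column-wise: X $ t :: real^'d is the
column X_t.  Parameters of the m-neuron network: (c, U, W) with neuron i < m having
c i :: real, U i :: real^'d, W i :: real^'d^'d.  The norm on real^'d^'d is the
Frobenius norm.\<close>

type_synonym 'd params = "(nat \<Rightarrow> real) \<times> (nat \<Rightarrow> real^'d) \<times> (nat \<Rightarrow> real^'d^'d)"

definition in_dom :: "real^'d^'t \<Rightarrow> bool" where
  "in_dom X = (\<forall>t. norm (X $ t) \<le> 1)"

definition softmax :: "('t::finite \<Rightarrow> real) \<Rightarrow> 't \<Rightarrow> real" where
  "softmax z t = exp (z t) / (\<Sum>s\<in>UNIV. exp (z s))"

text \<open>a(X;W) = X softmax(X^T W q), with (X^T W q)_t = X_t \<bullet> (W q).\<close>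
definition attn :: "real^'d^'t::finite \<Rightarrow> real^'d \<Rightarrow> real^'d^'d \<Rightarrow> real^'d" where
  "attn X q W = (\<Sum>t\<in>UNIV. softmax (\<lambda>s. (X $ s) \<bullet> (W *v q)) t *\<^sub>R (X $ t))"

definition neuron :: "(real \<Rightarrow> real) \<Rightarrow> real^'d^'t::finite \<Rightarrow> real^'d \<Rightarrow> real^'d \<Rightarrow> real^'d^'d \<Rightarrow> real" where
  "neuron \<sigma> X q U W = \<sigma> (U \<bullet> attn X q W)"

definition net :: "(real \<Rightarrow> real) \<Rightarrow> (real^'d^'t::finite \<Rightarrow> real^'d) \<Rightarrow> nat \<Rightarrow> real^'d^'t \<Rightarrow> ('d::finite) params \<Rightarrow> real" where
  "net \<sigma> Q m X \<phi> = (case \<phi> of (c, U, W) \<Rightarrow>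
     (1 / sqrt (real m)) * (\<Sum>i<m. c i * neuron \<sigma> X (Q X) (U i) (W i)))"

definition param_line :: "('d::finite) params \<Rightarrow> ('d::finite) params \<Rightarrow> real \<Rightarrow> 'd params" where
  "param_line \<phi>0 \<phi> s = (case \<phi>0 of (c0, U0, W0) \<Rightarrow> case \<phi> of (c, U, W) \<Rightarrow>
     (\<lambda>i. c0 i + s * (c i - c0 i), \<lambda>i. U0 i + s *\<^sub>R (U i - U0 i), \<lambda>i. W0 i + s *\<^sub>R (W i - W0 i)))"

text \<open>Linearization: f(X;phi0) + <grad f(X;phi0), phi - phi0>, the inner product being
written as the directional derivative of f at phi0 in direction phi - phi0.\<close>
definition net_lin :: "(real \<Rightarrow> real) \<Rightarrow> (real^'d^'t::finite \<Rightarrow> real^'d) \<Rightarrow> nat \<Rightarrow> real^'d^'t \<Rightarrow> ('d::finite) params \<Rightarrow> ('d::finite) params \<Rightarrow> real" where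
  "net_lin \<sigma> Q m X \<phi>0 \<phi> = net \<sigma> Q m X \<phi>0 + deriv (\<lambda>s. net \<sigma> Q m X (param_line \<phi>0 \<phi> s)) 0"

text \<open>Support of the symmetric initialization (Gaussian entries can take any real value).\<close>
definition sym_init :: "nat \<Rightarrow> ('d::finite) params \<Rightarrow> bool" where
  "sym_init m \<phi>0 = (case \<phi>0 of (c0, U0, W0) \<Rightarrow>
     (\<forall>i < m div 2. c0 i \<in> {-1, 1} \<and> c0 (i + m div 2) = - c0 i \<and>
        U0 (i + m div 2) = U0 i \<and> W0 (i + m div 2) = W0 i))"

definition in_Omega :: "nat \<Rightarrow> real \<Rightarrow> real \<Rightarrow> real \<Rightarrow> ('d::finite) params \<Rightarrow> ('d::finite) params \<Rightarrow> bool" where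
  "in_Omega m \<rho>c \<rho>u \<rho>w \<phi>0 \<phi> = (case \<phi>0 of (c0, U0, W0) \<Rightarrow> case \<phi> of (c, U, W) \<Rightarrow>
     (\<forall>i<m. \<bar>c i - c0 i\<bar> \<le> \<rho>c / sqrt (real m) \<and> norm (U i - U0 i) \<le> \<rho>u / sqrt (real m)
        \<and> norm (W i - W0 i) \<le> \<rho>w / sqrt (real m)))"

definition event_U :: "nat \<Rightarrow> real \<Rightarrow> (nat \<Rightarrow> real^('d::finite)) \<Rightarrow> bool" where
  "event_U m \<delta> U0 = (\<forall>i<m. norm (U0 i) \<le> sqrt (real CARD('d)) + sqrt (2 * ln (real m / (2 * \<delta>))))"

definition B_U :: "('d::finite) itself \<Rightarrow> nat \<Rightarrow> real \<Rightarrow> real \<Rightarrow> real" where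
  "B_U _ m \<delta> \<rho>u = sqrt (real CARD('d)) + sqrt (2 * ln (real m / (2 * \<delta>))) + \<rho>u / sqrt (real m)"

definition L1 :: "('d::finite) itself \<Rightarrow> real \<Rightarrow> nat \<Rightarrow> real \<Rightarrow> real \<Rightarrow> real" where
  "L1 D \<sigma>1 m \<delta> \<rho>u = \<sigma>1 * sqrt (1 + (B_U D m \<delta> \<rho>u)\<^sup>2)"

definition L2 :: "('d::finite) itself \<Rightarrow> real \<Rightarrow> real \<Rightarrow> nat \<Rightarrow> real \<Rightarrow> real \<Rightarrow> real" where
  "L2 D \<sigma>1 \<sigma>2 m \<delta> \<rho>u = \<sigma>2 * (1 + (B_U D m \<delta> \<rho>u)\<^sup>2) + 8 * \<sigma>1 * sqrt (1 + (B_U D m \<delta> \<rho>u)\<^sup>2)"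

end

theory Submission
  imports Defs
begin

(* Along the segment from phi0 to phi, neuron i contributes (c0 i + s dc) sigma (A s), where A s is
   the mean of the values U(s) . X_t under the softmax weights exp (X_t . W(s) q); these weights are
   an exponential tilt in s.  The derivative of a tilted mean is the mean of the derivative plus
   the covariance with the tilt direction, so A' and A'' are sums of weighted means and covariances
   of quantities bounded by w, u and B, and Cauchy-Schwarz bounds each covariance by the product of
   the bounds.  With |c0 i| = 1, a second order Taylor estimate then bounds the linearisation error
   of each neuron by O(1/m); m neurons scaled by 1/sqrt m give O(1/sqrt m), and a last
   Cauchy-Schwarz turns rho_u + B rho_w into sqrt (1 + B^2) sqrt (rho_w^2 + rho_u^2). *)

lemma abs_mult_le_mult:
  fixes a b :: "'a::linordered_idom"
  shows "\<bar>a\<bar> \<le> c \<Longrightarrow> \<bar>b\<bar> \<le> d \<Longrightarrow> \<bar>a * b\<bar> \<le> c * d"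
  unfolding abs_mult by (rule mult_mono) auto

lemma norm_matrix_vector_mult_le:
  fixes A :: "real^'n^'m"
  shows "norm (A *v x) \<le> norm A * norm x"
proof -
  have "(norm (A *v x))\<^sup>2 = (\<Sum>i\<in>UNIV. (A $ i \<bullet> x)\<^sup>2)"
    by (simp add: norm_vec_def L2_set_def matrix_mult_dot sum_nonneg)
  also have "\<dots> \<le> (\<Sum>i\<in>UNIV. (norm (A $ i))\<^sup>2 * (norm x)\<^sup>2)"
    by (intro sum_mono) (metis Cauchy_Schwarz_ineq2 abs_ge_zero power2_abs power_mono power_mult_distrib)
  also have "\<dots> = (norm A * norm x)\<^sup>2"
    by (simp add: norm_vec_def L2_set_def power_mult_distrib sum_nonneg flip: sum_distrib_right)
  finally show ?thesis
    by (simp add: power2_le_iff_abs_le)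
qed

lemma abs_diff_le_of_deriv_bound:
  fixes h h' :: "real \<Rightarrow> real"
  assumes "a \<le> b" and h: "\<And>s. (h has_real_derivative h' s) (at s)"
    and bound: "\<And>s. a \<le> s \<Longrightarrow> s \<le> b \<Longrightarrow> \<bar>h' s\<bar> \<le> M"
  shows "\<bar>h b - h a\<bar> \<le> M * (b - a)"
proof (cases "a = b")
  case False
  then obtain z where z: "a < z" "z < b" "h b - h a = (b - a) * h' z"
    using MVT2[of a b h h'] h \<open>a \<le> b\<close> by auto
  have "(b - a) * \<bar>h' z\<bar> \<le> (b - a) * M"
    using bound[of z] z by (intro mult_left_mono) auto
  then show ?thesis
    using z \<open>a \<le> b\<close> by (simp add: abs_mult mult.commute)
qed simp

lemma abs_taylor2_remainder_le:
  fixes h h' h'' :: "real \<Rightarrow> real"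
  assumes "a \<le> b" and h: "\<And>s. (h has_real_derivative h' s) (at s)"
    and h': "\<And>s. (h' has_real_derivative h'' s) (at s)"
    and bound: "\<And>s. a \<le> s \<Longrightarrow> s \<le> b \<Longrightarrow> \<bar>h'' s\<bar> \<le> M"
  shows "\<bar>h b - h a - (b - a) * h' a\<bar> \<le> M * (b - a)\<^sup>2"
proof (cases "a = b")
  case False
  then obtain z where z: "a < z" "z < b" "h b - h a = (b - a) * h' z"
    using MVT2[of a b h h'] h \<open>a \<le> b\<close> by auto
  have "\<bar>h' z - h' a\<bar> \<le> M * (z - a)"
    using z bound by (intro abs_diff_le_of_deriv_bound[OF _ h']) auto
  also have "\<dots> \<le> M * (b - a)"
    using z bound[of a] \<open>a \<le> b\<close> by (intro mult_left_mono) auto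
  finally have "(b - a) * \<bar>h' z - h' a\<bar> \<le> (b - a) * (M * (b - a))"
    using \<open>a \<le> b\<close> by (intro mult_left_mono) auto
  moreover have "h b - h a - (b - a) * h' a = (b - a) * (h' z - h' a)"
    using z by (simp add: algebra_simps)
  ultimately show ?thesis
    using \<open>a \<le> b\<close> by (simp add: abs_mult power2_eq_square mult.commute mult.left_commute)
qed simp

definition wmean :: "('t::finite \<Rightarrow> real) \<Rightarrow> ('t \<Rightarrow> real) \<Rightarrow> real" where
  "wmean P f = (\<Sum>t\<in>UNIV. P t * f t) / sum P UNIV"

definition wcov :: "('t::finite \<Rightarrow> real) \<Rightarrow> ('t \<Rightarrow> real) \<Rightarrow> ('t \<Rightarrow> real) \<Rightarrow> real" where
  "wcov P f g = wmean P (\<lambda>t. f t * g t) - wmean P f * wmean P g"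

lemma wmean_linear: "wmean P (\<lambda>t. a * f t + b * g t) = a * wmean P f + b * wmean P g"
  by (simp add: wmean_def algebra_simps sum.distrib sum_distrib_left add_divide_distrib)

lemma abs_wmean_le:
  assumes P: "\<And>t. 0 < P t" and f: "\<And>t. \<bar>f t\<bar> \<le> a"
  shows "\<bar>wmean P f\<bar> \<le> a"
proof -
  have Z: "0 < sum P UNIV"
    using P by (simp add: sum_pos)
  have "\<bar>\<Sum>t\<in>UNIV. P t * f t\<bar> \<le> (\<Sum>t\<in>UNIV. P t * a)"
    using P f by (intro order.trans[OF sum_abs] sum_mono) (simp add: abs_mult less_imp_le mult_left_mono)
  also have "\<dots> = a * sum P UNIV"
    by (simp add: sum_distrib_left mult.commute)
  finally show ?thesis
    using Z by (simp add: wmean_def abs_divide pos_divide_le_eq)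
qed

lemma wmean_Cauchy_Schwarz:
  assumes P: "\<And>t. 0 \<le> P t"
  shows "(wmean P (\<lambda>t. f t * g t))\<^sup>2 \<le> wmean P (\<lambda>t. (f t)\<^sup>2) * wmean P (\<lambda>t. (g t)\<^sup>2)"
proof -
  have "(\<Sum>t\<in>UNIV. sqrt (P t) * f t * (sqrt (P t) * g t))\<^sup>2
      \<le> (\<Sum>t\<in>UNIV. (sqrt (P t) * f t)\<^sup>2) * (\<Sum>t\<in>UNIV. (sqrt (P t) * g t)\<^sup>2)"
    by (rule Cauchy_Schwarz_ineq_sum)
  moreover have "sqrt (P t) * f t * (sqrt (P t) * g t) = P t * (f t * g t)"
    "(sqrt (P t) * f t)\<^sup>2 = P t * (f t)\<^sup>2" "(sqrt (P t) * g t)\<^sup>2 = P t * (g t)\<^sup>2" for t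
    using P[of t] by (simp_all add: power_mult_distrib algebra_simps)
  ultimately have "(\<Sum>t\<in>UNIV. P t * (f t * g t))\<^sup>2
      \<le> (\<Sum>t\<in>UNIV. P t * (f t)\<^sup>2) * (\<Sum>t\<in>UNIV. P t * (g t)\<^sup>2)"
    by simp
  then have "(\<Sum>t\<in>UNIV. P t * (f t * g t))\<^sup>2 / (sum P UNIV)\<^sup>2
      \<le> (\<Sum>t\<in>UNIV. P t * (f t)\<^sup>2) * (\<Sum>t\<in>UNIV. P t * (g t)\<^sup>2) / (sum P UNIV)\<^sup>2"
    by (rule divide_right_mono) simp
  then show ?thesis
    by (simp add: wmean_def power_divide power2_eq_square[of "sum P UNIV"])
qed

lemma wcov_eq_wmean_centered:
  assumes "sum P UNIV \<noteq> 0"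
  shows "wcov P f g = wmean P (\<lambda>t. (f t - wmean P f) * g t)"
  using wmean_linear[of P 1 "\<lambda>t. f t * g t" "- wmean P f" g] by (simp add: wcov_def algebra_simps)

lemma wmean_centered_square:
  assumes "sum P UNIV \<noteq> 0"
  shows "wmean P (\<lambda>t. (f t - wmean P f)\<^sup>2) = wmean P (\<lambda>t. (f t)\<^sup>2) - (wmean P f)\<^sup>2"
proof -
  define \<mu> where "\<mu> = wmean P f"
  have "(\<Sum>t\<in>UNIV. P t * (f t - \<mu>)\<^sup>2)
      = (\<Sum>t\<in>UNIV. P t * (f t)\<^sup>2) - 2 * \<mu> * (\<Sum>t\<in>UNIV. P t * f t) + \<mu>\<^sup>2 * sum P UNIV"
    by (simp add: power2_eq_square algebra_simps sum.distrib sum_subtractf sum_distrib_left)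
  also have "(\<Sum>t\<in>UNIV. P t * f t) = \<mu> * sum P UNIV"
    using assms by (simp add: \<mu>_def wmean_def)
  finally have "(\<Sum>t\<in>UNIV. P t * (f t - \<mu>)\<^sup>2) = (\<Sum>t\<in>UNIV. P t * (f t)\<^sup>2) - \<mu>\<^sup>2 * sum P UNIV"
    by (simp add: power2_eq_square)
  then show ?thesis
    unfolding \<mu>_def[symmetric] wmean_def[of P "\<lambda>t. (f t - \<mu>)\<^sup>2"] wmean_def[of P "\<lambda>t. (f t)\<^sup>2"]
    using assms by (simp add: diff_divide_distrib)
qed

lemma abs_wcov_le:
  assumes P: "\<And>t. 0 < P t" and f: "\<And>t. \<bar>f t\<bar> \<le> a" and g: "\<And>t. \<bar>g t\<bar> \<le> b"
  shows "\<bar>wcov P f g\<bar> \<le> a * b"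
proof -
  have Z: "sum P UNIV \<noteq> 0"
    using P by (simp add: sum_pos less_imp_neq[symmetric])
  have square_bound: "\<bar>x\<^sup>2\<bar> \<le> c\<^sup>2" if "\<bar>x\<bar> \<le> c" for x c :: real
  proof -
    have "0 \<le> c"
      using that abs_ge_zero[of x] by linarith
    then show ?thesis
      using that by (simp add: power2_le_iff_abs_le)
  qed
  have "wmean P (\<lambda>t. (f t - wmean P f)\<^sup>2) \<le> wmean P (\<lambda>t. (f t)\<^sup>2)"
    unfolding wmean_centered_square[OF Z] by simp
  also have "\<dots> \<le> a\<^sup>2"
    using abs_wmean_le[of P "\<lambda>t. (f t)\<^sup>2"] P f square_bound by (simp add: abs_le_iff)
  finally have var_f: "wmean P (\<lambda>t. (f t - wmean P f)\<^sup>2) \<le> a\<^sup>2" .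
  have var_g: "wmean P (\<lambda>t. (g t)\<^sup>2) \<le> b\<^sup>2"
    using abs_wmean_le[of P "\<lambda>t. (g t)\<^sup>2"] P g square_bound by (simp add: abs_le_iff)
  have "(wcov P f g)\<^sup>2 \<le> wmean P (\<lambda>t. (f t - wmean P f)\<^sup>2) * wmean P (\<lambda>t. (g t)\<^sup>2)"
    unfolding wcov_eq_wmean_centered[OF Z]
    using P by (intro wmean_Cauchy_Schwarz less_imp_le)
  also have "\<dots> \<le> (a * b)\<^sup>2"
  proof -
    have "0 \<le> wmean P (\<lambda>t. (g t)\<^sup>2)"
      unfolding wmean_def using P by (intro divide_nonneg_nonneg sum_nonneg) (simp_all add: less_imp_le)
    then show ?thesis
      unfolding power_mult_distrib using var_f var_g by (intro mult_mono) auto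
  qed
  finally show ?thesis
    using f[of undefined] g[of undefined] by (simp add: power2_le_iff_abs_le)
qed

definition tilt :: "('t \<Rightarrow> real) \<Rightarrow> ('t \<Rightarrow> real) \<Rightarrow> real \<Rightarrow> 't \<Rightarrow> real" where
  "tilt \<alpha> e s t = exp (\<alpha> t + s * e t)"

lemma tilt_pos: "0 < tilt \<alpha> e s t"
  by (simp add: tilt_def)

lemma has_real_derivative_wmean_tilt:
  fixes \<alpha> e :: "'t::finite \<Rightarrow> real"
  assumes f: "\<And>t. ((\<lambda>s. f s t) has_real_derivative f' t) (at s)"
  shows "((\<lambda>s. wmean (tilt \<alpha> e s) (f s)) has_real_derivative
           wmean (tilt \<alpha> e s) f' + wcov (tilt \<alpha> e s) e (f s)) (at s)"
proof -
  define Z where "Z s = sum (tilt \<alpha> e s) UNIV" for s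
  define N where "N s = (\<Sum>t\<in>UNIV. tilt \<alpha> e s t * f s t)" for s
  have tilt: "((\<lambda>s. tilt \<alpha> e s t) has_real_derivative tilt \<alpha> e s t * e t) (at s)" for t
    unfolding tilt_def by (auto intro!: derivative_eq_intros)
  have Z: "(Z has_real_derivative (\<Sum>t\<in>UNIV. tilt \<alpha> e s t * e t)) (at s)"
    unfolding Z_def by (intro DERIV_sum tilt)
  have N: "(N has_real_derivative
      (\<Sum>t\<in>UNIV. tilt \<alpha> e s t * (e t * f s t)) + (\<Sum>t\<in>UNIV. tilt \<alpha> e s t * f' t)) (at s)"
    unfolding N_def sum.distrib[symmetric]
    by (intro DERIV_sum) (auto intro!: derivative_eq_intros tilt f simp: algebra_simps)
  have "Z s \<noteq> 0"
    unfolding Z_def by (simp add: sum_pos tilt_pos less_imp_neq[symmetric])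
  then have quotient_rule: "(a * Z s - N s * c) / (Z s * Z s) = a / Z s - N s / Z s * (c / Z s)" for a c
    by (simp add: field_simps)
  have "((\<lambda>s. N s / Z s) has_real_derivative
      ((\<Sum>t\<in>UNIV. tilt \<alpha> e s t * (e t * f s t)) + (\<Sum>t\<in>UNIV. tilt \<alpha> e s t * f' t)) / Z s
        - N s / Z s * ((\<Sum>t\<in>UNIV. tilt \<alpha> e s t * e t) / Z s)) (at s)"
    using DERIV_divide[OF N Z \<open>Z s \<noteq> 0\<close>] by (simp only: power2_eq_square quotient_rule)
  then show ?thesis
    by (simp add: wcov_def wmean_def N_def Z_def add_divide_distrib algebra_simps)
qed

locale tilted_line =
  fixes \<alpha> e y0 dy :: "'t::finite \<Rightarrow> real"
begin

definition y :: "real \<Rightarrow> 't \<Rightarrow> real" where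
  "y s t = y0 t + s * dy t"

definition A :: "real \<Rightarrow> real" where
  "A s = wmean (tilt \<alpha> e s) (y s)"

definition A' :: "real \<Rightarrow> real" where
  "A' s = wmean (tilt \<alpha> e s) dy + wcov (tilt \<alpha> e s) e (y s)"

definition A'' :: "real \<Rightarrow> real" where
  "A'' s = wcov (tilt \<alpha> e s) e dy + wmean (tilt \<alpha> e s) (\<lambda>t. e t * dy t)
     + wcov (tilt \<alpha> e s) e (\<lambda>t. e t * y s t) - wcov (tilt \<alpha> e s) e e * A s
     - wmean (tilt \<alpha> e s) e * A' s"

lemma has_real_derivative_A: "(A has_real_derivative A' s) (at s)"
  unfolding A_def[abs_def] A'_def
  by (rule has_real_derivative_wmean_tilt) (auto simp: y_def intro!: derivative_eq_intros)

lemma has_real_derivative_A': "(A' has_real_derivative A'' s) (at s)"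
proof -
  have A': "A' = (\<lambda>s. wmean (tilt \<alpha> e s) dy + wmean (tilt \<alpha> e s) (\<lambda>t. e t * y s t)
      - wmean (tilt \<alpha> e s) e * A s)"
    by (auto simp: A'_def A_def wcov_def)
  have "wmean P (\<lambda>t. 0) = 0" for P :: "'t \<Rightarrow> real"
    by (simp add: wmean_def)
  then have dy: "((\<lambda>s. wmean (tilt \<alpha> e s) dy) has_real_derivative wcov (tilt \<alpha> e s) e dy) (at s)"
    and e: "((\<lambda>s. wmean (tilt \<alpha> e s) e) has_real_derivative wcov (tilt \<alpha> e s) e e) (at s)"
    using has_real_derivative_wmean_tilt[of "\<lambda>s. dy" "\<lambda>t. 0"]
      has_real_derivative_wmean_tilt[of "\<lambda>s. e" "\<lambda>t. 0"] by simp_all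
  have "((\<lambda>s. e t * y s t) has_real_derivative e t * dy t) (at s)" for t
    unfolding y_def by (auto intro!: derivative_eq_intros)
  then have e_y: "((\<lambda>s. wmean (tilt \<alpha> e s) (\<lambda>t. e t * y s t)) has_real_derivative
      wmean (tilt \<alpha> e s) (\<lambda>t. e t * dy t) + wcov (tilt \<alpha> e s) e (\<lambda>t. e t * y s t)) (at s)"
    by (rule has_real_derivative_wmean_tilt)
  show ?thesis
    unfolding A'
    by (rule DERIV_cong[OF DERIV_diff[OF DERIV_add[OF dy e_y] DERIV_mult[OF e has_real_derivative_A]]])
      (simp add: A''_def algebra_simps)
qed

end

locale bounded_tilted_line = tilted_line +
  fixes w u B :: real
  assumes e_bound: "\<bar>e t\<bar> \<le> w" and dy_bound: "\<bar>dy t\<bar> \<le> u" and y0_bound: "\<bar>y0 t\<bar> + u \<le> B"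
begin

lemma y_bound:
  assumes "0 \<le> s" "s \<le> 1"
  shows "\<bar>y s t\<bar> \<le> B"
proof -
  have "\<bar>s * dy t\<bar> \<le> 1 * u"
    using assms dy_bound[of t] by (intro abs_mult_le_mult) auto
  moreover have "\<bar>y s t\<bar> \<le> \<bar>y0 t\<bar> + \<bar>s * dy t\<bar>"
    unfolding y_def by (rule abs_triangle_ineq)
  ultimately show ?thesis
    using y0_bound[of t] by simp
qed

lemma abs_A'_le:
  assumes "0 \<le> s" "s \<le> 1"
  shows "\<bar>A' s\<bar> \<le> u + B * w"
proof -
  have "\<bar>wmean (tilt \<alpha> e s) dy\<bar> \<le> u"
    by (intro abs_wmean_le tilt_pos dy_bound)
  moreover have "\<bar>wcov (tilt \<alpha> e s) e (y s)\<bar> \<le> w * B"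
    by (intro abs_wcov_le tilt_pos e_bound y_bound assms)
  ultimately show ?thesis
    unfolding A'_def by (simp only: abs_le_iff mult.commute) linarith
qed

lemma abs_A''_le:
  assumes "0 \<le> s" "s \<le> 1"
  shows "\<bar>A'' s\<bar> \<le> 3 * w * (u + B * w)"
proof -
  let ?P = "tilt \<alpha> e s"
  have e_dy: "\<bar>e t * dy t\<bar> \<le> w * u" and e_y: "\<bar>e t * y s t\<bar> \<le> w * B" for t
    by (intro abs_mult_le_mult e_bound dy_bound y_bound assms)+
  have "\<bar>wcov ?P e dy\<bar> \<le> w * u"
    by (intro abs_wcov_le tilt_pos e_bound dy_bound)
  moreover have "\<bar>wmean ?P (\<lambda>t. e t * dy t)\<bar> \<le> w * u"
    by (intro abs_wmean_le tilt_pos e_dy)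
  moreover have "\<bar>wcov ?P e (\<lambda>t. e t * y s t)\<bar> \<le> w * (w * B)"
    by (intro abs_wcov_le tilt_pos e_bound e_y)
  moreover have "\<bar>wcov ?P e e * A s\<bar> \<le> (w * w) * B"
    unfolding A_def by (intro abs_mult_le_mult abs_wcov_le abs_wmean_le tilt_pos e_bound y_bound assms)
  moreover have "\<bar>wmean ?P e * A' s\<bar> \<le> w * (u + B * w)"
    by (intro abs_mult_le_mult abs_wmean_le tilt_pos e_bound abs_A'_le assms)
  moreover have "3 * w * (u + B * w) = w * u + w * u + w * (w * B) + (w * w) * B + w * (u + B * w)"
    by (simp add: algebra_simps)
  ultimately show ?thesis
    unfolding A''_def by (simp only: abs_le_iff) linarith
qed

lemma abs_comp_A_remainder_le:
  fixes \<sigma> \<sigma>' \<sigma>'' :: "real \<Rightarrow> real"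
  assumes d1: "\<And>x. (\<sigma> has_real_derivative \<sigma>' x) (at x)"
    and d2: "\<And>x. (\<sigma>' has_real_derivative \<sigma>'' x) (at x)"
    and b1: "\<And>x. \<bar>\<sigma>' x\<bar> \<le> \<sigma>1" and b2: "\<And>x. \<bar>\<sigma>'' x\<bar> \<le> \<sigma>2"
  shows "\<bar>\<sigma> (A 1) - \<sigma> (A 0) - \<sigma>' (A 0) * A' 0\<bar> \<le> \<sigma>2 * (u + B * w)\<^sup>2 + \<sigma>1 * (3 * w * (u + B * w))"
    and "\<bar>\<sigma> (A 1) - \<sigma> (A 0)\<bar> \<le> \<sigma>1 * (u + B * w)"
proof -
  define K where "K = u + B * w"
  define h' where "h' s = \<sigma>' (A s) * A' s" for s
  define h'' where "h'' s = \<sigma>'' (A s) * (A' s)\<^sup>2 + \<sigma>' (A s) * A'' s" for s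
  have h: "((\<lambda>s. \<sigma> (A s)) has_real_derivative h' s) (at s)" for s
    unfolding h'_def using DERIV_chain2[OF d1 has_real_derivative_A] by (simp add: mult.commute)
  have h': "(h' has_real_derivative h'' s) (at s)" for s
    unfolding h'_def[abs_def] h''_def
    using DERIV_mult[OF DERIV_chain2[OF d2 has_real_derivative_A] has_real_derivative_A']
    by (simp add: algebra_simps power2_eq_square)
  have h'_bound: "\<bar>h' s\<bar> \<le> \<sigma>1 * K" if "0 \<le> s" "s \<le> 1" for s
    unfolding h'_def K_def by (intro abs_mult_le_mult b1 abs_A'_le that)
  have h''_bound: "\<bar>h'' s\<bar> \<le> \<sigma>2 * K\<^sup>2 + \<sigma>1 * (3 * w * K)" if "0 \<le> s" "s \<le> 1" for s
  proof -
    have "\<bar>(A' s)\<^sup>2\<bar> \<le> K\<^sup>2"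
      unfolding power2_eq_square K_def by (intro abs_mult_le_mult abs_A'_le that)
    then have "\<bar>\<sigma>'' (A s) * (A' s)\<^sup>2\<bar> \<le> \<sigma>2 * K\<^sup>2"
      by (intro abs_mult_le_mult b2)
    moreover have "\<bar>\<sigma>' (A s) * A'' s\<bar> \<le> \<sigma>1 * (3 * w * K)"
      unfolding K_def by (intro abs_mult_le_mult b1 abs_A''_le that)
    ultimately show ?thesis
      unfolding h''_def by (simp only: abs_le_iff) linarith
  qed
  show "\<bar>\<sigma> (A 1) - \<sigma> (A 0) - \<sigma>' (A 0) * A' 0\<bar> \<le> \<sigma>2 * (u + B * w)\<^sup>2 + \<sigma>1 * (3 * w * (u + B * w))"
    using abs_taylor2_remainder_le[OF _ h h' h''_bound, of 0 1] by (simp add: h'_def K_def)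
  show "\<bar>\<sigma> (A 1) - \<sigma> (A 0)\<bar> \<le> \<sigma>1 * (u + B * w)"
    using abs_diff_le_of_deriv_bound[OF _ h h'_bound, of 0 1] by (simp add: K_def)
qed

end

lemma inner_attn: "U \<bullet> attn X q W = wmean (\<lambda>t. exp (X $ t \<bullet> (W *v q))) (\<lambda>t. U \<bullet> X $ t)"
  by (simp add: attn_def softmax_def wmean_def inner_sum_right sum_divide_distrib)

lemma neuron_param_line:
  "neuron \<sigma> X q (U0 + s *\<^sub>R dU) (W0 + s *\<^sub>R dW)
    = \<sigma> (tilted_line.A (\<lambda>t. X $ t \<bullet> (W0 *v q)) (\<lambda>t. X $ t \<bullet> (dW *v q))
          (\<lambda>t. U0 \<bullet> X $ t) (\<lambda>t. dU \<bullet> X $ t) s)"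
  by (simp add: neuron_def inner_attn tilted_line.A_def tilted_line.y_def[abs_def] tilt_def[abs_def]
      matrix_vector_mult_add_rdistrib inner_add_left inner_add_right
      flip: scaleR_matrix_vector_assoc)

lemma attention_line_bounds:
  fixes X :: "real^'d::finite^'t::finite" and dW :: "real^'d^'d"
  assumes X: "\<And>t. norm (X $ t) \<le> 1" and q: "norm q \<le> 1"
    and dU: "norm dU \<le> u" and dW: "norm dW \<le> w" and U0: "norm U0 + u \<le> B"
  shows "\<bar>X $ t \<bullet> (dW *v q)\<bar> \<le> w" and "\<bar>dU \<bullet> X $ t\<bar> \<le> u" and "\<bar>U0 \<bullet> X $ t\<bar> + u \<le> B"
proof -
  have "\<bar>X $ t \<bullet> (dW *v q)\<bar> \<le> norm (X $ t) * (norm dW * norm q)"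
    by (meson Cauchy_Schwarz_ineq2 mult_left_mono norm_ge_zero norm_matrix_vector_mult_le order.trans)
  also have "\<dots> \<le> 1 * (w * 1)"
    using X q dW order.trans[OF norm_ge_zero dW] by (intro mult_mono) auto
  finally show "\<bar>X $ t \<bullet> (dW *v q)\<bar> \<le> w"
    by simp
  have "\<bar>dU \<bullet> X $ t\<bar> \<le> norm dU * norm (X $ t)"
    by (rule Cauchy_Schwarz_ineq2)
  also have "\<dots> \<le> u * 1"
    using X dU order.trans[OF norm_ge_zero dU] by (intro mult_mono) auto
  finally show "\<bar>dU \<bullet> X $ t\<bar> \<le> u"
    by simp
  have "\<bar>U0 \<bullet> X $ t\<bar> \<le> norm U0 * norm (X $ t)"
    by (rule Cauchy_Schwarz_ineq2)
  also have "\<dots> \<le> norm U0"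
    using X mult_left_mono[of "norm (X $ t)" 1 "norm U0"] by simp
  finally show "\<bar>U0 \<bullet> X $ t\<bar> + u \<le> B"
    using U0 by simp
qed

lemma neuron_param_line_remainder:
  fixes \<sigma> \<sigma>' \<sigma>'' :: "real \<Rightarrow> real" and X :: "real^'d::finite^'t::finite"
    and W0 dW :: "real^'d^'d"
  assumes d1: "\<And>x. (\<sigma> has_real_derivative \<sigma>' x) (at x)"
    and d2: "\<And>x. (\<sigma>' has_real_derivative \<sigma>'' x) (at x)"
    and b1: "\<And>x. \<bar>\<sigma>' x\<bar> \<le> \<sigma>1" and b2: "\<And>x. \<bar>\<sigma>'' x\<bar> \<le> \<sigma>2"
    and X: "\<And>t. norm (X $ t) \<le> 1" and q: "norm q \<le> 1"
    and c0: "\<bar>c0\<bar> \<le> 1" and dc: "\<bar>dc\<bar> \<le> D"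
    and dU: "norm dU \<le> u" and dW: "norm dW \<le> w" and U0: "norm U0 + u \<le> B"
  defines "g \<equiv> \<lambda>s. (c0 + s * dc) * neuron \<sigma> X q (U0 + s *\<^sub>R dU) (W0 + s *\<^sub>R dW)"
  shows "g differentiable (at 0)"
    and "\<bar>g 1 - g 0 - deriv g 0\<bar>
      \<le> \<sigma>2 * (u + B * w)\<^sup>2 + \<sigma>1 * (3 * w * (u + B * w)) + D * (\<sigma>1 * (u + B * w))"
proof -
  interpret bounded_tilted_line "\<lambda>t. X $ t \<bullet> (W0 *v q)" "\<lambda>t. X $ t \<bullet> (dW *v q)"
    "\<lambda>t. U0 \<bullet> X $ t" "\<lambda>t. dU \<bullet> X $ t" w u B
    using attention_line_bounds[OF X q dU dW U0] by unfold_locales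
  define h where "h s = \<sigma> (A s)" for s
  have g: "g = (\<lambda>s. (c0 + s * dc) * h s)"
    by (simp add: g_def h_def[abs_def] neuron_param_line)
  have "((\<lambda>s. c0 + s * dc) has_real_derivative dc) (at 0)"
    by (auto intro!: derivative_eq_intros)
  from DERIV_mult[OF this DERIV_chain2[OF d1 has_real_derivative_A]]
  have dg: "(g has_real_derivative dc * h 0 + c0 * (\<sigma>' (A 0) * A' 0)) (at 0)"
    by (simp add: g h_def[abs_def] mult.commute)
  then show "g differentiable (at 0)"
    using real_differentiable_def by blast
  have "g 1 - g 0 - deriv g 0 = c0 * (h 1 - h 0 - \<sigma>' (A 0) * A' 0) + dc * (h 1 - h 0)"
    using DERIV_imp_deriv[OF dg] by (simp add: g algebra_simps)
  also have "\<bar>\<dots>\<bar> \<le> 1 * (\<sigma>2 * (u + B * w)\<^sup>2 + \<sigma>1 * (3 * w * (u + B * w))) + D * (\<sigma>1 * (u + B * w))"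
    unfolding h_def using c0 dc abs_comp_A_remainder_le[OF d1 d2 b1 b2]
    by (intro order.trans[OF abs_triangle_ineq] add_mono abs_mult_le_mult) auto
  finally show "\<bar>g 1 - g 0 - deriv g 0\<bar>
      \<le> \<sigma>2 * (u + B * w)\<^sup>2 + \<sigma>1 * (3 * w * (u + B * w)) + D * (\<sigma>1 * (u + B * w))"
    by simp
qed

lemma abs_scaled_sum_remainder_le:
  fixes g :: "'i \<Rightarrow> real \<Rightarrow> real" and c R :: real
  assumes "finite I" and diff: "\<And>i. i \<in> I \<Longrightarrow> g i differentiable (at 0)"
    and rem: "\<And>i. i \<in> I \<Longrightarrow> \<bar>g i 1 - g i 0 - deriv (g i) 0\<bar> \<le> R"
  defines "F \<equiv> \<lambda>s. c * (\<Sum>i\<in>I. g i s)"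
  shows "\<bar>F 1 - F 0 - deriv F 0\<bar> \<le> \<bar>c\<bar> * (card I * R)"
proof -
  have "(F has_real_derivative c * (\<Sum>i\<in>I. deriv (g i) 0)) (at 0)"
    unfolding F_def using diff by (intro DERIV_cmult DERIV_sum) (simp add: DERIV_deriv_iff_real_differentiable)
  then have "F 1 - F 0 - deriv F 0 = c * (\<Sum>i\<in>I. g i 1 - g i 0 - deriv (g i) 0)"
    by (simp add: DERIV_imp_deriv F_def sum_subtractf sum.distrib algebra_simps)
  also have "\<bar>\<dots>\<bar> \<le> \<bar>c\<bar> * (\<Sum>i\<in>I. R)"
    unfolding abs_mult using rem by (intro mult_left_mono order.trans[OF sum_abs] sum_mono) auto
  finally show ?thesis
    by simp
qed

lemma param_line_0: "param_line \<phi>0 \<phi> 0 = \<phi>0"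
  by (cases \<phi>0; cases \<phi>) (simp add: param_line_def)

lemma param_line_1: "param_line \<phi>0 \<phi> 1 = \<phi>"
  by (cases \<phi>0; cases \<phi>) (simp add: param_line_def)

lemma sym_init_abs_c0:
  assumes "sym_init m (c0, U0, W0)" and "even m" and "i < m"
  shows "\<bar>c0 i\<bar> = 1"
proof -
  have pair: "c0 k \<in> {-1, 1} \<and> c0 (k + m div 2) = - c0 k" if "k < m div 2" for k
    using assms(1) that by (simp add: sym_init_def)
  show ?thesis
  proof (cases "i < m div 2")
    case True
    then show ?thesis
      using pair[of i] by auto
  next
    case False
    then have "i = (i - m div 2) + m div 2" and "i - m div 2 < m div 2"
      using assms(2,3) by auto
    then show ?thesis
      using pair[of "i - m div 2"] by auto
  qed
qed

lemma linearization_constant_le: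
  fixes \<sigma>1 \<sigma>2 B \<rho>c \<rho>u \<rho>w r :: real
  assumes "0 \<le> \<sigma>1" "0 \<le> \<sigma>2" "0 \<le> \<rho>c" "0 \<le> \<rho>w" "0 < r"
  defines "S \<equiv> \<rho>w\<^sup>2 + \<rho>u\<^sup>2"
  shows "r * (\<sigma>2 * (\<rho>u / r + B * (\<rho>w / r))\<^sup>2 + \<sigma>1 * (3 * (\<rho>w / r) * (\<rho>u / r + B * (\<rho>w / r)))
        + \<rho>c / r * (\<sigma>1 * (\<rho>u / r + B * (\<rho>w / r))))
    \<le> (1 / r) * (\<sigma>1 * sqrt (1 + B\<^sup>2) * \<rho>c * sqrt S
        + (\<sigma>2 * (1 + B\<^sup>2) + 8 * \<sigma>1 * sqrt (1 + B\<^sup>2)) * S)"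
proof -
  define K where "K = \<rho>u + B * \<rho>w"
  define q where "q = sqrt (1 + B\<^sup>2)"
  have K_square: "K\<^sup>2 \<le> (1 + B\<^sup>2) * S"
    using zero_le_power2[of "B * \<rho>u - \<rho>w"] unfolding K_def S_def
    by (simp add: power2_eq_square algebra_simps)
  then have K: "K \<le> q * sqrt S"
    unfolding q_def by (metis real_le_rsqrt real_sqrt_mult)
  have "\<rho>w * K \<le> \<rho>w * (q * sqrt S)"
    using K assms by (intro mult_left_mono)
  also have "\<dots> \<le> sqrt S * (q * sqrt S)"
    unfolding S_def q_def by (intro mult_right_mono) (auto simp: real_le_rsqrt)
  also have "\<dots> = q * S"
    unfolding S_def by simp
  finally have "\<sigma>1 * (3 * \<rho>w * K) \<le> \<sigma>1 * (3 * (q * S))"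
    using assms by (intro mult_left_mono) auto
  moreover have "\<sigma>2 * K\<^sup>2 \<le> \<sigma>2 * ((1 + B\<^sup>2) * S)"
    using K_square assms by (intro mult_left_mono)
  moreover have "\<rho>c * (\<sigma>1 * K) \<le> \<rho>c * (\<sigma>1 * (q * sqrt S))"
    using K assms by (intro mult_left_mono) auto
  moreover have "0 \<le> \<sigma>1 * (q * S)"
    using assms unfolding q_def S_def by simp
  ultimately have "\<sigma>2 * K\<^sup>2 + \<sigma>1 * (3 * \<rho>w * K) + \<rho>c * (\<sigma>1 * K)
      \<le> \<sigma>1 * q * \<rho>c * sqrt S + (\<sigma>2 * (1 + B\<^sup>2) + 8 * \<sigma>1 * q) * S"
    by (simp add: algebra_simps)
  moreover have "r * (\<sigma>2 * (\<rho>u / r + B * (\<rho>w / r))\<^sup>2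
        + \<sigma>1 * (3 * (\<rho>w / r) * (\<rho>u / r + B * (\<rho>w / r))) + \<rho>c / r * (\<sigma>1 * (\<rho>u / r + B * (\<rho>w / r))))
      = (1 / r) * (\<sigma>2 * K\<^sup>2 + \<sigma>1 * (3 * \<rho>w * K) + \<rho>c * (\<sigma>1 * K))"
    using \<open>0 < r\<close> by (simp add: K_def power2_eq_square field_simps)
  ultimately show ?thesis
    unfolding q_def using \<open>0 < r\<close> by (simp add: divide_right_mono)
qed

lemma abs_net_sub_net_lin_le:
  fixes \<sigma> \<sigma>' \<sigma>'' :: "real \<Rightarrow> real" and X :: "real^'d::finite^'t::finite"
  assumes d1: "\<And>x. (\<sigma> has_real_derivative \<sigma>' x) (at x)"
    and d2: "\<And>x. (\<sigma>' has_real_derivative \<sigma>'' x) (at x)"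
    and b1: "\<And>x. \<bar>\<sigma>' x\<bar> \<le> \<sigma>1" and b2: "\<And>x. \<bar>\<sigma>'' x\<bar> \<le> \<sigma>2"
    and X: "in_dom X" and q: "norm (Q X) \<le> 1"
    and neurons: "\<And>i. i < m \<Longrightarrow> \<bar>c0 i\<bar> \<le> 1 \<and> \<bar>c i - c0 i\<bar> \<le> D \<and> norm (U i - U0 i) \<le> u
      \<and> norm (W i - W0 i) \<le> w \<and> norm (U0 i) + u \<le> B"
  shows "\<bar>net \<sigma> Q m X (c, U, W) - net_lin \<sigma> Q m X (c0, U0, W0) (c, U, W)\<bar>
    \<le> sqrt m * (\<sigma>2 * (u + B * w)\<^sup>2 + \<sigma>1 * (3 * w * (u + B * w)) + D * (\<sigma>1 * (u + B * w)))"
proof -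
  define R where "R = \<sigma>2 * (u + B * w)\<^sup>2 + \<sigma>1 * (3 * w * (u + B * w)) + D * (\<sigma>1 * (u + B * w))"
  define g where "g i s = (c0 i + s * (c i - c0 i))
    * neuron \<sigma> X (Q X) (U0 i + s *\<^sub>R (U i - U0 i)) (W0 i + s *\<^sub>R (W i - W0 i))" for i s
  define F where "F s = net \<sigma> Q m X (param_line (c0, U0, W0) (c, U, W) s)" for s
  have X: "norm (X $ t) \<le> 1" for t
    using X by (simp add: in_dom_def)
  have neuron: "g i differentiable (at 0) \<and> \<bar>g i 1 - g i 0 - deriv (g i) 0\<bar> \<le> R" if "i < m" for i
    using neurons[OF that] neuron_param_line_remainder[OF d1 d2 b1 b2 X q]
    unfolding g_def[abs_def] R_def by blast
  have "F = (\<lambda>s. (1 / sqrt m) * (\<Sum>i<m. g i s))"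
    by (simp add: F_def[abs_def] net_def param_line_def g_def)
  then have "\<bar>F 1 - F 0 - deriv F 0\<bar> \<le> \<bar>1 / sqrt m\<bar> * (card {..<m} * R)"
    by (simp only:) (rule abs_scaled_sum_remainder_le; use neuron in auto)
  also have "\<dots> = real m / sqrt m * R"
    by simp
  also have "\<dots> = sqrt m * R"
    by (simp add: real_div_sqrt)
  finally show ?thesis
    by (simp add: F_def[abs_def] R_def net_lin_def param_line_0 param_line_1)
qed

theorem lemma3:
  fixes \<sigma> \<sigma>' \<sigma>'' :: "real \<Rightarrow> real" and \<sigma>0 \<sigma>1 \<sigma>2 :: real
    and Q :: "real^'d^'t::finite \<Rightarrow> real^'d"
    and m n :: nat and \<delta> \<rho>c \<rho>u \<rho>w :: real
    and Xs :: "nat \<Rightarrow> real^'d^'t"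
    and \<phi>0 \<phi> :: "'d params"
  assumes d1: "\<And>x. (\<sigma> has_real_derivative \<sigma>' x) (at x)"
    and d2: "\<And>x. (\<sigma>' has_real_derivative \<sigma>'' x) (at x)"
    and b0: "\<And>x. \<bar>\<sigma> x\<bar> \<le> \<sigma>0" and b1: "\<And>x. \<bar>\<sigma>' x\<bar> \<le> \<sigma>1" and b2: "\<And>x. \<bar>\<sigma>'' x\<bar> \<le> \<sigma>2"
    and Qb: "\<And>X. in_dom X \<Longrightarrow> norm (Q X) \<le> 1"
    and m_even: "even m" and m_pos: "m > 0"
    and \<delta>: "0 < \<delta>" "\<delta> < 1"
    and \<rho>: "0 < \<rho>c" "0 < \<rho>u" "0 < \<rho>w"
    and Xs: "\<And>j. j < n \<Longrightarrow> in_dom (Xs j)"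
    and init: "sym_init m \<phi>0"
    and event: "event_U m \<delta> (fst (snd \<phi>0))"
    and Om: "in_Omega m \<rho>c \<rho>u \<rho>w \<phi>0 \<phi>"
  shows "\<forall>j<n. \<bar>net \<sigma> Q m (Xs j) \<phi> - net_lin \<sigma> Q m (Xs j) \<phi>0 \<phi>\<bar>
     \<le> (1 / sqrt (real m)) * (L1 TYPE('d) \<sigma>1 m \<delta> \<rho>u * \<rho>c * sqrt (\<rho>w\<^sup>2 + \<rho>u\<^sup>2)
         + L2 TYPE('d) \<sigma>1 \<sigma>2 m \<delta> \<rho>u * (\<rho>w\<^sup>2 + \<rho>u\<^sup>2))"
proof (intro allI impI)
  fix j assume "j < n"
  let ?bound = "(1 / sqrt (real m)) * (L1 TYPE('d) \<sigma>1 m \<delta> \<rho>u * \<rho>c * sqrt (\<rho>w\<^sup>2 + \<rho>u\<^sup>2)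
    + L2 TYPE('d) \<sigma>1 \<sigma>2 m \<delta> \<rho>u * (\<rho>w\<^sup>2 + \<rho>u\<^sup>2))"
  obtain c0 U0 W0 c U W where \<phi>0: "\<phi>0 = (c0, U0, W0)" and \<phi>: "\<phi> = (c, U, W)"
    by (cases \<phi>0; cases \<phi>)
  define B where "B = B_U TYPE('d) m \<delta> \<rho>u"
  have "\<bar>c0 i\<bar> \<le> 1 \<and> \<bar>c i - c0 i\<bar> \<le> \<rho>c / sqrt m \<and> norm (U i - U0 i) \<le> \<rho>u / sqrt m
      \<and> norm (W i - W0 i) \<le> \<rho>w / sqrt m \<and> norm (U0 i) + \<rho>u / sqrt m \<le> B" if "i < m" for i
    using sym_init_abs_c0[of m c0 U0 W0 i] init m_even Om event that
    by (simp add: \<phi>0 \<phi> in_Omega_def event_U_def B_def B_U_def)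
  then have "\<bar>net \<sigma> Q m (Xs j) \<phi> - net_lin \<sigma> Q m (Xs j) \<phi>0 \<phi>\<bar>
      \<le> sqrt m * (\<sigma>2 * (\<rho>u / sqrt m + B * (\<rho>w / sqrt m))\<^sup>2
        + \<sigma>1 * (3 * (\<rho>w / sqrt m) * (\<rho>u / sqrt m + B * (\<rho>w / sqrt m)))
        + \<rho>c / sqrt m * (\<sigma>1 * (\<rho>u / sqrt m + B * (\<rho>w / sqrt m))))"
    unfolding \<phi>0 \<phi> using Xs[OF \<open>j < n\<close>] Qb
    by (intro abs_net_sub_net_lin_le[OF d1 d2 b1 b2]) auto
  also have "\<dots> \<le> ?bound"
    unfolding L1_def L2_def B_def[symmetric] using b1[of 0] b2[of 0] \<rho> m_pos
    by (intro linearization_constant_le) auto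
  finally show "\<bar>net \<sigma> Q m (Xs j) \<phi> - net_lin \<sigma> Q m (Xs j) \<phi>0 \<phi>\<bar> \<le> ?bound" .
qed

end
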